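(* Let $\nu\geq5$ be an integer and let $f_{\nu-1}(z,\zeta)=z^{\nu-1}f(\zeta)$, $g_{\nu-2}(z,\zeta)=z^{\nu-2}g(\zeta)$, $h_\nu(z,\zeta)=z^\nu h(\zeta)$ with $f,g,h$ holomorphic near $0\in\mathbb{C}$. Define $$\Phi(z,\zeta,\bar z,\bar\zeta):=2\operatorname{Re}\Big\{\frac{\bar z+z\bar\zeta}{1-\zeta\bar\zeta}f_{\nu-1}(z,\zeta)+\frac{(\bar z+z\bar\zeta)^2}{2(1-\zeta\bar\zeta)^2}g_{\nu-2}(z,\zeta)-\frac12h_\nu(z,\zeta)\Big\}.$$ Then $\Phi=O_{\bar z}(3)+O_{\bar\zeta}(1)$ if and only if $f_{\nu-1}=g_{\nu-2}=h_\nu=0$. Equivalently, at weight level $\nu\geq5$, the only biholomorphism $z'=z+f_{\nu-1}$, $\zeta'=\zeta+g_{\nu-2}$, $w'=w+h_\nu$ for which the weight-$\nu$ parts $G_\nu$ and $G'_\nu=G_\nu-\Phi$ both satisfy $G_\nu=O_{\bar z}(3)+O_{\bar\zeta}(1)=G'_\nu$ is the identity.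
   Context: $2\operatorname{Re}\{X\}=X+\overline X$. The notation $O_{\bar z}(3)+O_{\bar\zeta}(1)$ means a function of the form $\bar z^3A+\bar\zeta B$ with $A,B$ convergent power series in $(z,\zeta,\bar z,\bar\zeta)$. Weights: $[z]=[\bar z]=1$, $[\zeta]=[\bar\zeta]=0$; $G_\nu$ denotes a weighted homogeneous real power series of weight $\nu$ (all monomials $z^a\zeta^b\bar z^c\bar\zeta^d$ with $a+c=\nu$). *)

theory Defs
  imports "HOL-Analysis.Analysis"
begin

definition conv_ps4 :: "(nat \<Rightarrow> nat \<Rightarrow> nat \<Rightarrow> nat \<Rightarrow> complex) \<Rightarrow> bool" where
  "conv_ps4 c \<longleftrightarrow> (\<exists>\<rho>>0. (\<lambda>(a, b, k, d). norm (c a b k d) * \<rho> ^ (a + b + k + d))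
      summable_on (UNIV :: (nat \<times> nat \<times> nat \<times> nat) set))"

definition eval_ps4 :: "(nat \<Rightarrow> nat \<Rightarrow> nat \<Rightarrow> nat \<Rightarrow> complex) \<Rightarrow> complex \<Rightarrow> complex \<Rightarrow> complex \<Rightarrow> complex \<Rightarrow> complex" where
  "eval_ps4 c x1 x2 x3 x4 =
     (\<Sum>\<^sub>\<infinity>(a, b, k, d) \<in> (UNIV :: (nat \<times> nat \<times> nat \<times> nat) set).
        c a b k d * x1 ^ a * x2 ^ b * x3 ^ k * x4 ^ d)"

text \<open>A function F of (z, zeta) (real-analytic, viewed as a function of z, zeta, zbar, zetabar)
  is O_zbar(3) + O_zetabar(1): F = zbar^3 A + zetabar B near 0 with A, B convergent power series
  in (z, zeta, zbar, zetabar).\<close>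
definition O_zbar3_zetabar1 :: "(complex \<Rightarrow> complex \<Rightarrow> complex) \<Rightarrow> bool" where
  "O_zbar3_zetabar1 F \<longleftrightarrow>
     (\<exists>A B. conv_ps4 A \<and> conv_ps4 B \<and>
        (\<exists>\<epsilon>>0. \<forall>z \<zeta>. norm z < \<epsilon> \<and> norm \<zeta> < \<epsilon> \<longrightarrow>
           F z \<zeta> = cnj z ^ 3 * eval_ps4 A z \<zeta> (cnj z) (cnj \<zeta>)
                  + cnj \<zeta> * eval_ps4 B z \<zeta> (cnj z) (cnj \<zeta>)))"

definition Phi :: "nat \<Rightarrow> (complex \<Rightarrow> complex) \<Rightarrow> (complex \<Rightarrow> complex) \<Rightarrow> (complex \<Rightarrow> complex)
    \<Rightarrow> complex \<Rightarrow> complex \<Rightarrow> complex" where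
  "Phi \<nu> f g h z \<zeta> =
     (let X = (cnj z + z * cnj \<zeta>) / (1 - \<zeta> * cnj \<zeta>) * (z ^ (\<nu> - 1) * f \<zeta>)
            + (cnj z + z * cnj \<zeta>) ^ 2 / (2 * (1 - \<zeta> * cnj \<zeta>) ^ 2) * (z ^ (\<nu> - 2) * g \<zeta>)
            - 1 / 2 * (z ^ \<nu> * h \<zeta>)
      in X + cnj X)"

end

theory Submission
  imports Defs "HOL-Complex_Analysis.Complex_Analysis"
begin

(*
  Polarize: replacing cnj z and cnj \<zeta> by independent variables w1, w2 turns the identity
  Phi = cnj z^3 A + cnj \<zeta> B into a function G(z, \<zeta>, w1, w2), holomorphic in all four
  variables, that vanishes on the totally real set w1 = cnj z, w2 = cnj \<zeta>. Such a function
  vanishes identically: on the circle |z| = s we have cnj z = s^2/z, so the identity theorem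
  spreads the zeros from the circle to an annulus, i.e. to the hyperbola z w1 = s^2, and from
  there along rays to all of the polydisc. At w2 = 0 the polarized identity says that
  -z^nu h(\<zeta>)/2 + z^(nu-1) f(\<zeta>) w1 + z^(nu-2) g(\<zeta>) w1^2/2 is O(w1^3), the conjugate
  terms being O(w1^3) because nu - 2 \<ge> 3; hence f, g and h vanish.
*)

lemma norm_monomial4_le:
  fixes c x1 x2 x3 x4 :: complex
  assumes "norm x1 \<le> \<rho>" "norm x2 \<le> \<rho>" "norm x3 \<le> \<rho>" "norm x4 \<le> \<rho>"
  shows "norm (c * x1 ^ a * x2 ^ b * x3 ^ k * x4 ^ d) \<le> norm c * \<rho> ^ (a + b + k + d)"
proof -
  have "0 \<le> \<rho>" using assms(1) norm_ge_zero order_trans by blast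
  have "norm (c * x1 ^ a * x2 ^ b * x3 ^ k * x4 ^ d)
      = norm c * (norm x1 ^ a * norm x2 ^ b * norm x3 ^ k * norm x4 ^ d)"
    by (simp add: norm_mult norm_power)
  also have "\<dots> \<le> norm c * (\<rho> ^ a * \<rho> ^ b * \<rho> ^ k * \<rho> ^ d)"
    using assms \<open>0 \<le> \<rho>\<close> by (intro mult_left_mono mult_mono power_mono) auto
  finally show ?thesis by (simp add: power_add)
qed

lemma holomorphic_on_eval_ps4:
  assumes summable: "(\<lambda>(a, b, k, d). norm (c a b k d) * \<rho> ^ (a + b + k + d)) summable_on UNIV"
    and S: "open S"
    and hol: "p1 holomorphic_on S" "p2 holomorphic_on S" "p3 holomorphic_on S" "p4 holomorphic_on S"
    and range: "p1 ` S \<subseteq> ball 0 \<rho>" "p2 ` S \<subseteq> ball 0 \<rho>" "p3 ` S \<subseteq> ball 0 \<rho>" "p4 ` S \<subseteq> ball 0 \<rho>"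
  shows "(\<lambda>x. eval_ps4 c (p1 x) (p2 x) (p3 x) (p4 x)) holomorphic_on S"
proof -
  define t where "t = (\<lambda>(a, b, k, d) x. c a b k d * p1 x ^ a * p2 x ^ b * p3 x ^ k * p4 x ^ d)"
  have eval: "eval_ps4 c (p1 x) (p2 x) (p3 x) (p4 x) = (\<Sum>\<^sub>\<infinity>i\<in>UNIV. t i x)" for x
    by (simp add: eval_ps4_def t_def case_prod_unfold)
  have partial_sums: "(\<lambda>x. \<Sum>i\<in>I. t i x) holomorphic_on S" for I
    unfolding t_def case_prod_unfold by (intro holomorphic_intros hol)
  have "(\<lambda>x. \<Sum>\<^sub>\<infinity>i\<in>UNIV. t i x) holomorphic_on ball x e" if "cball x e \<subseteq> S" for x e
  proof -
    have "norm (t i y) \<le> (\<lambda>(a, b, k, d). norm (c a b k d) * \<rho> ^ (a + b + k + d)) i"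
      if "y \<in> cball x e" for i y
    proof -
      have "y \<in> S" using that \<open>cball x e \<subseteq> S\<close> by blast
      then have "norm (p1 y) \<le> \<rho>" "norm (p2 y) \<le> \<rho>" "norm (p3 y) \<le> \<rho>" "norm (p4 y) \<le> \<rho>"
        using range by (auto simp: image_subset_iff less_imp_le)
      then show ?thesis by (cases i) (simp add: t_def norm_monomial4_le)
    qed
    then have ulim: "uniform_limit (cball x e) (\<lambda>I y. \<Sum>i\<in>I. t i y) (\<lambda>y. \<Sum>\<^sub>\<infinity>i\<in>UNIV. t i y)
        (finite_subsets_at_top UNIV)"
      using summable by (intro Weierstrass_m_test_general) auto
    have "continuous_on (cball x e) (\<lambda>y. \<Sum>i\<in>I. t i y) \<and> (\<lambda>y. \<Sum>i\<in>I. t i y) holomorphic_on ball x e" for I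
      using partial_sums that ball_subset_cball
      by (meson holomorphic_on_imp_continuous_on holomorphic_on_subset order_trans)
    then show ?thesis
      using holomorphic_uniform_limit[OF _ ulim] finite_subsets_at_top_neq_bot by blast
  qed
  then have "(\<lambda>x. \<Sum>\<^sub>\<infinity>i\<in>UNIV. t i x) analytic_on S"
    using S by (meson analytic_on_def open_contains_cball)
  then show ?thesis
    unfolding eval by (rule analytic_imp_holomorphic)
qed

lemma O_zbar3_zetabar1_if_locally_zero:
  assumes "\<epsilon> > 0" and "\<And>z \<zeta>. norm z < \<epsilon> \<Longrightarrow> norm \<zeta> < \<epsilon> \<Longrightarrow> F z \<zeta> = 0"
  shows "O_zbar3_zetabar1 F"
proof -
  define Z :: "nat \<Rightarrow> nat \<Rightarrow> nat \<Rightarrow> nat \<Rightarrow> complex" where "Z = (\<lambda>_ _ _ _. 0)"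
  have "conv_ps4 Z" unfolding conv_ps4_def Z_def by (intro exI[of _ 1]) (simp add: case_prod_unfold)
  moreover have "eval_ps4 Z x1 x2 x3 x4 = 0" for x1 x2 x3 x4
    by (simp add: eval_ps4_def Z_def case_prod_unfold)
  ultimately show ?thesis
    unfolding O_zbar3_zetabar1_def using assms by (intro exI[of _ Z] exI[of _ \<epsilon>] conjI allI impI) auto
qed

(* Holomorphy in two variables, encoded as stability under holomorphic substitution; by Hartogs'
   theorem this is joint holomorphy on D \<times> D. *)
definition holomorphic2_on :: "(complex \<Rightarrow> complex \<Rightarrow> complex) \<Rightarrow> complex set \<Rightarrow> bool" where
  "holomorphic2_on F D \<longleftrightarrow> (\<forall>S p q. open S \<and> p holomorphic_on S \<and> q holomorphic_on S
      \<and> p ` S \<subseteq> D \<and> q ` S \<subseteq> D \<longrightarrow> (\<lambda>x. F (p x) (q x)) holomorphic_on S)"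

lemma holomorphic2_onD:
  "holomorphic2_on F D \<Longrightarrow> open S \<Longrightarrow> p holomorphic_on S \<Longrightarrow> q holomorphic_on S
    \<Longrightarrow> p ` S \<subseteq> D \<Longrightarrow> q ` S \<subseteq> D \<Longrightarrow> (\<lambda>x. F (p x) (q x)) holomorphic_on S"
  unfolding holomorphic2_on_def by blast

lemma isCont_eq_zero_if_zero_on_punctured_ball:
  fixes g :: "'a::{metric_space, perfect_space} \<Rightarrow> 'b::{t2_space, zero}"
  assumes "isCont g a" "\<delta> > 0" "\<And>x. x \<in> ball a \<delta> \<Longrightarrow> x \<noteq> a \<Longrightarrow> g x = 0"
  shows "g a = 0"
proof -
  have zero: "\<forall>\<^sub>F x in at a. g x = 0"
    using eventually_at_ball'[OF assms(2), of a UNIV] by (rule eventually_mono) (use assms(3) in auto)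
  have "((\<lambda>x. 0) \<longlongrightarrow> g a) (at a)"
    using Lim_transform_eventually[OF assms(1)[unfolded isCont_def] zero] .
  then show ?thesis by (rule LIM_const_eq[symmetric])
qed

lemma of_real_islimpt_sphere:
  assumes "s > 0"
  shows "complex_of_real s islimpt sphere 0 s"
proof (rule connected_imp_perfect)
  show "connected (sphere (0::complex) s)" by (rule connected_sphere) auto
  show "complex_of_real s \<in> sphere 0 s" using assms by simp
  show "sphere (0::complex) s \<noteq> {x}" for x
  proof -
    have "complex_of_real s \<in> sphere 0 s" "- complex_of_real s \<in> sphere 0 s"
      "complex_of_real s \<noteq> - complex_of_real s"
      using assms by auto
    then show ?thesis by (metis singletonD)
  qed
qed

lemma holomorphic2_on_zero_on_hyperbola:
  assumes F: "holomorphic2_on F (ball 0 \<delta>)" and diag: "\<And>x. x \<in> ball 0 \<delta> \<Longrightarrow> F x (cnj x) = 0"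
    and z: "z \<in> ball 0 \<delta>" and w: "w \<in> ball 0 \<delta>" and zw: "z * w = of_real t" "t > 0"
  shows "F z w = 0"
proof -
  define s where "s = sqrt t"
  define A where "A = ball 0 \<delta> - cball (0::complex) (s\<^sup>2 / \<delta>)"
  have "\<delta> > 0" using z le_less_trans[OF norm_ge_zero] by simp
  have t: "t = norm z * norm w" using zw by (metis norm_mult norm_of_real abs_of_pos)
  with zw(2) have "norm z > 0" by (metis mult_zero_left norm_ge_zero order_less_le)
  with t w have t_less: "t < \<delta> * norm z" by (simp add: mult.commute mult_strict_right_mono)
  have s: "s > 0" "s\<^sup>2 = t" using zw(2) by (auto simp: s_def)
  have "t < \<delta>\<^sup>2"
    using t_less z \<open>\<delta> > 0\<close> by (simp add: power2_eq_square mult_strict_left_mono order.strict_trans)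
  then have "s < \<delta>" using \<open>\<delta> > 0\<close> zw(2) by (simp add: s_def real_less_lsqrt)
  have A_iff: "x \<in> A \<longleftrightarrow> t < \<delta> * norm x \<and> norm x < \<delta>" for x
    using \<open>\<delta> > 0\<close> s by (auto simp: A_def not_le pos_divide_less_eq mult.commute)
  have "(\<lambda>x. F x (of_real t / x)) holomorphic_on A"
  proof (rule holomorphic2_onD[OF F])
    show "open A" unfolding A_def by blast
    show "(\<lambda>x. x) holomorphic_on A" by (intro holomorphic_intros)
    show "(\<lambda>x. of_real t / x) holomorphic_on A"
      using zw(2) by (intro holomorphic_intros) (auto simp: A_iff)
    show "(\<lambda>x. x) ` A \<subseteq> ball 0 \<delta>" by (auto simp: A_def)
    show "(\<lambda>x. of_real t / x) ` A \<subseteq> ball 0 \<delta>"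
      using zw(2) by (auto simp: A_iff norm_divide divide_less_eq mult.commute)
  qed
  then have "F z (of_real t / z) = 0"
  proof (rule analytic_continuation[where U = "sphere 0 s" and \<xi> = "of_real s"])
    show "open A" unfolding A_def by blast
    have "A = {x. s\<^sup>2 / \<delta> < norm (x - 0) \<and> norm (x - 0) < \<delta>}" by (auto simp: A_def)
    then show "connected A" using connected_annulus(1)[where a = "0::complex"] by simp
    have "t < \<delta> * s" using s \<open>s < \<delta>\<close> by (metis power2_eq_square mult_strict_right_mono)
    then show "sphere 0 s \<subseteq> A" "of_real s \<in> A" using s \<open>s < \<delta>\<close> by (auto simp: A_iff)
    show "complex_of_real s islimpt sphere 0 s" using s(1) by (rule of_real_islimpt_sphere)
    show "z \<in> A" using t_less z by (simp add: A_iff)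
    show "F x (of_real t / x) = 0" if "x \<in> sphere 0 s" for x
    proof -
      have "of_real t / x = cnj x"
        using that s by (auto simp: field_simps complex_norm_square[symmetric])
      then show ?thesis using that \<open>s < \<delta>\<close> diag[of x] by simp
    qed
  qed
  moreover have "of_real t / z = w" using zw \<open>norm z > 0\<close> by (auto simp: field_simps)
  ultimately show ?thesis by simp
qed

lemma holomorphic2_on_zero_if_zero_on_cnj_diagonal:
  assumes F: "holomorphic2_on F (ball 0 \<delta>)" and diag: "\<And>x. x \<in> ball 0 \<delta> \<Longrightarrow> F x (cnj x) = 0"
    and z: "z \<in> ball 0 \<delta>" and w: "w \<in> ball 0 \<delta>"
  shows "F z w = 0"
proof -
  have "\<delta> > 0" using z le_less_trans[OF norm_ge_zero] by simp
  have off_axis: "F z w = 0" if z: "z \<in> ball 0 \<delta>" "z \<noteq> 0" and w: "w \<in> ball 0 \<delta>" for z w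
  proof -
    define U where "U = {w \<in> ball 0 \<delta>. \<exists>t>0. z * w = of_real t}"
    have "(\<lambda>w. F z w) holomorphic_on ball 0 \<delta>"
      using z(1) by (intro holomorphic2_onD[OF F]) (auto intro: holomorphic_intros)
    then show ?thesis
    proof (rule analytic_continuation[where U = U and \<xi> = 0])
      show "0 islimpt U"
        unfolding islimpt_approachable
      proof (intro allI impI)
        fix e :: real assume "e > 0"
        define r where "r = min e \<delta> / 2"
        have r: "r > 0" "r < e" "r < \<delta>" using \<open>e > 0\<close> \<open>\<delta> > 0\<close> by (auto simp: r_def)
        define x where "x = of_real (norm z * r) / z"
        have "z * x = of_real (norm z * r)" "norm x = r"
          using z(2) r by (auto simp: x_def norm_divide norm_mult)
        then show "\<exists>x\<in>U. x \<noteq> 0 \<and> dist x 0 < e"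
          using r z(2) by (intro bexI[of _ x]) (auto simp: U_def simp del: of_real_mult)
      qed
      show "\<And>w. w \<in> U \<Longrightarrow> F z w = 0"
        using holomorphic2_on_zero_on_hyperbola[OF F diag z(1)] by (auto simp: U_def)
    qed (use \<open>\<delta> > 0\<close> w in \<open>auto simp: U_def\<close>)
  qed
  show ?thesis
  proof (cases "z = 0")
    case True
    have "(\<lambda>z. F z w) holomorphic_on ball 0 \<delta>"
      using w by (intro holomorphic2_onD[OF F]) (auto intro: holomorphic_intros)
    then have "isCont (\<lambda>z. F z w) 0"
      using \<open>\<delta> > 0\<close>
      by (metis centre_in_ball continuous_on_eq_continuous_at holomorphic_on_imp_continuous_on open_ball)
    then show ?thesis
      using True off_axis w \<open>\<delta> > 0\<close> isCont_eq_zero_if_zero_on_punctured_ball by force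
  qed (use off_axis z w in blast)
qed

lemma holomorphic2_pairs_zero_if_zero_on_cnj_diagonal:
  assumes hol1: "\<And>\<zeta> w2. \<zeta> \<in> ball 0 \<delta> \<Longrightarrow> w2 \<in> ball 0 \<delta> \<Longrightarrow> holomorphic2_on (\<lambda>z w1. G z \<zeta> w1 w2) (ball 0 \<delta>)"
    and hol2: "\<And>z w1. z \<in> ball 0 \<delta> \<Longrightarrow> w1 \<in> ball 0 \<delta> \<Longrightarrow> holomorphic2_on (\<lambda>\<zeta> w2. G z \<zeta> w1 w2) (ball 0 \<delta>)"
    and diag: "\<And>z \<zeta>. z \<in> ball 0 \<delta> \<Longrightarrow> \<zeta> \<in> ball 0 \<delta> \<Longrightarrow> G z \<zeta> (cnj z) (cnj \<zeta>) = 0"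
    and "z \<in> ball 0 \<delta>" "\<zeta> \<in> ball 0 \<delta>" "w1 \<in> ball 0 \<delta>" "w2 \<in> ball 0 \<delta>"
  shows "G z \<zeta> w1 w2 = 0"
proof -
  have "G z \<zeta> w1 (cnj \<zeta>) = 0" if "z \<in> ball 0 \<delta>" "\<zeta> \<in> ball 0 \<delta>" "w1 \<in> ball 0 \<delta>" for z \<zeta> w1
    using holomorphic2_on_zero_if_zero_on_cnj_diagonal[OF hol1 diag] that by simp
  then show ?thesis
    using holomorphic2_on_zero_if_zero_on_cnj_diagonal[OF hol2] assms(4-7) by blast
qed

lemma cubic_remainder_coeffs_eq_zero:
  fixes a b c :: complex
  assumes R: "isCont R 0" and "\<delta> > 0"
    and zero: "\<And>w. w \<in> ball 0 \<delta> \<Longrightarrow> a + b * w + c * w\<^sup>2 + w ^ 3 * R w = 0"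
  shows "a = 0" "b = 0" "c = 0"
proof -
  show "a = 0" using zero[of 0] \<open>\<delta> > 0\<close> by simp
  have factored: "w * (b + w * (c + w * R w)) = 0" if "w \<in> ball 0 \<delta>" for w
    using zero[OF that] \<open>a = 0\<close> by (simp add: power2_eq_square power3_eq_cube algebra_simps)
  have b: "b + w * (c + w * R w) = 0" if "w \<in> ball 0 \<delta>" "w \<noteq> 0" for w
    using factored[OF that(1)] that(2) by simp
  have "isCont (\<lambda>w. b + w * (c + w * R w)) 0" using R by (intro continuous_intros)
  from isCont_eq_zero_if_zero_on_punctured_ball[OF this \<open>\<delta> > 0\<close> b]
  show "b = 0" by simp
  then have c: "c + w * R w = 0" if "w \<in> ball 0 \<delta>" "w \<noteq> 0" for w
    using b[OF that] that by simp
  have "isCont (\<lambda>w. c + w * R w) 0" using R by (intro continuous_intros)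
  from isCont_eq_zero_if_zero_on_punctured_ball[OF this \<open>\<delta> > 0\<close> c]
  show "c = 0" by simp
qed

definition cnj_reflect :: "(complex \<Rightarrow> complex) \<Rightarrow> complex \<Rightarrow> complex" where
  "cnj_reflect f w = cnj (f (cnj w))"

lemma holomorphic_on_cnj_reflect:
  assumes "f holomorphic_on ball 0 r"
  shows "cnj_reflect f holomorphic_on ball 0 r"
proof -
  have "cnj ` ball 0 r = ball (0::complex) r"
    by (auto simp: image_iff intro!: bexI[where x="cnj _"])
  then have "cnj \<circ> f \<circ> cnj holomorphic_on ball 0 r"
    using assms by (intro holomorphic_on_compose_cnj_cnj) auto
  then show ?thesis by (simp add: cnj_reflect_def[abs_def] comp_def)
qed

definition Phi_X_polar :: "nat \<Rightarrow> (complex \<Rightarrow> complex) \<Rightarrow> (complex \<Rightarrow> complex) \<Rightarrow> (complex \<Rightarrow> complex)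
    \<Rightarrow> complex \<Rightarrow> complex \<Rightarrow> complex \<Rightarrow> complex \<Rightarrow> complex" where
  "Phi_X_polar \<nu> f g h z \<zeta> w1 w2 =
     (w1 + z * w2) / (1 - \<zeta> * w2) * (z ^ (\<nu> - 1) * f \<zeta>)
   + (w1 + z * w2) ^ 2 / (2 * (1 - \<zeta> * w2) ^ 2) * (z ^ (\<nu> - 2) * g \<zeta>)
   - 1 / 2 * (z ^ \<nu> * h \<zeta>)"

definition Phi_polar :: "nat \<Rightarrow> (complex \<Rightarrow> complex) \<Rightarrow> (complex \<Rightarrow> complex) \<Rightarrow> (complex \<Rightarrow> complex)
    \<Rightarrow> complex \<Rightarrow> complex \<Rightarrow> complex \<Rightarrow> complex \<Rightarrow> complex" where
  "Phi_polar \<nu> f g h z \<zeta> w1 w2 = Phi_X_polar \<nu> f g h z \<zeta> w1 w2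
     + Phi_X_polar \<nu> (cnj_reflect f) (cnj_reflect g) (cnj_reflect h) w1 w2 z \<zeta>"

lemma Phi_eq_Phi_polar: "Phi \<nu> f g h z \<zeta> = Phi_polar \<nu> f g h z \<zeta> (cnj z) (cnj \<zeta>)"
  by (simp add: Phi_def Phi_polar_def Phi_X_polar_def cnj_reflect_def Let_def mult.commute)

lemma holomorphic_on_Phi_X_polar:
  assumes "f holomorphic_on ball 0 r" "g holomorphic_on ball 0 r" "h holomorphic_on ball 0 r"
    and "q1 holomorphic_on S" "q2 holomorphic_on S" "q3 holomorphic_on S" "q4 holomorphic_on S"
    and "q2 ` S \<subseteq> ball 0 r" and "\<And>x. x \<in> S \<Longrightarrow> q2 x * q4 x \<noteq> 1"
  shows "(\<lambda>x. Phi_X_polar \<nu> f g h (q1 x) (q2 x) (q3 x) (q4 x)) holomorphic_on S"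
proof -
  have "(\<lambda>x. f (q2 x)) holomorphic_on S" "(\<lambda>x. g (q2 x)) holomorphic_on S" "(\<lambda>x. h (q2 x)) holomorphic_on S"
    using assms holomorphic_on_compose_gen[of q2 S _ "ball 0 r"] by (auto simp: comp_def)
  then show ?thesis
    unfolding Phi_X_polar_def using assms(4-7,9) by (intro holomorphic_intros) auto
qed

lemma holomorphic_on_Phi_polar:
  assumes "f holomorphic_on ball 0 r" "g holomorphic_on ball 0 r" "h holomorphic_on ball 0 r"
    and "q1 holomorphic_on S" "q2 holomorphic_on S" "q3 holomorphic_on S" "q4 holomorphic_on S"
    and "q2 ` S \<subseteq> ball 0 r" "q4 ` S \<subseteq> ball 0 r" and "\<And>x. x \<in> S \<Longrightarrow> q2 x * q4 x \<noteq> 1"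
  shows "(\<lambda>x. Phi_polar \<nu> f g h (q1 x) (q2 x) (q3 x) (q4 x)) holomorphic_on S"
  unfolding Phi_polar_def using assms
  by (intro holomorphic_intros holomorphic_on_Phi_X_polar holomorphic_on_cnj_reflect)
     (auto simp: mult.commute)

lemma Phi_polar_eq_if_O_zbar3_zetabar1:
  assumes "r > 0" and hol: "f holomorphic_on ball 0 r" "g holomorphic_on ball 0 r" "h holomorphic_on ball 0 r"
    and O: "O_zbar3_zetabar1 (Phi \<nu> f g h)"
  obtains \<delta> \<rho> A B where "\<delta> > 0" "\<delta> \<le> \<rho>"
    "(\<lambda>(a, b, k, d). norm (A a b k d) * \<rho> ^ (a + b + k + d)) summable_on UNIV"
    "\<And>z \<zeta> w1 w2. z \<in> ball 0 \<delta> \<Longrightarrow> \<zeta> \<in> ball 0 \<delta> \<Longrightarrow> w1 \<in> ball 0 \<delta> \<Longrightarrow> w2 \<in> ball 0 \<delta> \<Longrightarrow>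
       Phi_polar \<nu> f g h z \<zeta> w1 w2 = w1 ^ 3 * eval_ps4 A z \<zeta> w1 w2 + w2 * eval_ps4 B z \<zeta> w1 w2"
proof -
  obtain A B \<epsilon> where "conv_ps4 A" "conv_ps4 B" "\<epsilon> > 0" and eq: "\<And>z \<zeta>. norm z < \<epsilon> \<Longrightarrow> norm \<zeta> < \<epsilon> \<Longrightarrow>
      Phi \<nu> f g h z \<zeta> = cnj z ^ 3 * eval_ps4 A z \<zeta> (cnj z) (cnj \<zeta>) + cnj \<zeta> * eval_ps4 B z \<zeta> (cnj z) (cnj \<zeta>)"
    using O unfolding O_zbar3_zetabar1_def by blast
  then obtain \<rho>A \<rho>B where "\<rho>A > 0" "\<rho>B > 0"
    and A: "(\<lambda>(a, b, k, d). norm (A a b k d) * \<rho>A ^ (a + b + k + d)) summable_on UNIV"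
    and B: "(\<lambda>(a, b, k, d). norm (B a b k d) * \<rho>B ^ (a + b + k + d)) summable_on UNIV"
    unfolding conv_ps4_def by blast
  define \<delta> where "\<delta> = Min {\<epsilon>, r, \<rho>A, \<rho>B, 1}"
  have "\<delta> > 0" "\<delta> \<le> \<epsilon>" "\<delta> \<le> r" "\<delta> \<le> \<rho>A" "\<delta> \<le> \<rho>B" "\<delta> \<le> 1"
    using \<open>\<epsilon> > 0\<close> \<open>r > 0\<close> \<open>\<rho>A > 0\<close> \<open>\<rho>B > 0\<close> by (auto simp: \<delta>_def)
  define G where "G z \<zeta> w1 w2 = Phi_polar \<nu> f g h z \<zeta> w1 w2
      - w1 ^ 3 * eval_ps4 A z \<zeta> w1 w2 - w2 * eval_ps4 B z \<zeta> w1 w2" for z \<zeta> w1 w2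
  have G_hol: "(\<lambda>x. G (q1 x) (q2 x) (q3 x) (q4 x)) holomorphic_on S"
    if "open S" "q1 holomorphic_on S" "q2 holomorphic_on S" "q3 holomorphic_on S" "q4 holomorphic_on S"
      "q1 ` S \<subseteq> ball 0 \<delta>" "q2 ` S \<subseteq> ball 0 \<delta>" "q3 ` S \<subseteq> ball 0 \<delta>" "q4 ` S \<subseteq> ball 0 \<delta>"
    for S q1 q2 q3 q4
  proof -
    have "q2 x * q4 x \<noteq> 1" if "x \<in> S" for x
    proof -
      have "norm (q2 x * q4 x) < 1 * 1"
        using \<open>x \<in> S\<close> \<open>q2 ` S \<subseteq> ball 0 \<delta>\<close> \<open>q4 ` S \<subseteq> ball 0 \<delta>\<close> \<open>\<delta> \<le> 1\<close>
        by (intro norm_mult_less) auto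
      then show ?thesis by auto
    qed
    moreover have "ball 0 \<delta> \<subseteq> ball 0 r" "ball 0 \<delta> \<subseteq> ball 0 \<rho>A" "ball 0 \<delta> \<subseteq> ball 0 \<rho>B"
      using \<open>\<delta> \<le> r\<close> \<open>\<delta> \<le> \<rho>A\<close> \<open>\<delta> \<le> \<rho>B\<close> by auto
    ultimately show ?thesis
      unfolding G_def using that
      by (intro holomorphic_intros holomorphic_on_Phi_polar[OF hol] holomorphic_on_eval_ps4[OF A]
          holomorphic_on_eval_ps4[OF B]) auto
  qed
  have G_real: "G z \<zeta> (cnj z) (cnj \<zeta>) = 0" if "z \<in> ball 0 \<delta>" "\<zeta> \<in> ball 0 \<delta>" for z \<zeta>
    using eq[of z \<zeta>] that \<open>\<delta> \<le> \<epsilon>\<close> by (simp add: G_def Phi_eq_Phi_polar)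
  have G_zero: "G z \<zeta> w1 w2 = 0"
    if "z \<in> ball 0 \<delta>" "\<zeta> \<in> ball 0 \<delta>" "w1 \<in> ball 0 \<delta>" "w2 \<in> ball 0 \<delta>" for z \<zeta> w1 w2
  proof (rule holomorphic2_pairs_zero_if_zero_on_cnj_diagonal[where G = G])
    show "holomorphic2_on (\<lambda>z w1. G z \<zeta>' w1 w2') (ball 0 \<delta>)"
      if "\<zeta>' \<in> ball 0 \<delta>" "w2' \<in> ball 0 \<delta>" for \<zeta>' w2'
      unfolding holomorphic2_on_def using that by (auto intro!: G_hol holomorphic_intros)
    show "holomorphic2_on (\<lambda>\<zeta>' w2'. G z' \<zeta>' w1' w2') (ball 0 \<delta>)"
      if "z' \<in> ball 0 \<delta>" "w1' \<in> ball 0 \<delta>" for z' w1'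
      unfolding holomorphic2_on_def using that by (auto intro!: G_hol holomorphic_intros)
  qed (use that G_real in auto)
  show ?thesis
  proof (rule that[OF \<open>\<delta> > 0\<close> \<open>\<delta> \<le> \<rho>A\<close> A])
    fix z \<zeta> w1 w2 :: complex
    assume "z \<in> ball 0 \<delta>" "\<zeta> \<in> ball 0 \<delta>" "w1 \<in> ball 0 \<delta>" "w2 \<in> ball 0 \<delta>"
    then show "Phi_polar \<nu> f g h z \<zeta> w1 w2 = w1 ^ 3 * eval_ps4 A z \<zeta> w1 w2 + w2 * eval_ps4 B z \<zeta> w1 w2"
      using G_zero[of z \<zeta> w1 w2] by (simp add: G_def algebra_simps)
  qed
qed

lemma vanishing_if_Phi_O_zbar3_zetabar1:
  fixes \<nu> :: nat
  assumes "\<nu> \<ge> 5" "r > 0"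
    and "f holomorphic_on ball 0 r" "g holomorphic_on ball 0 r" "h holomorphic_on ball 0 r"
    and "O_zbar3_zetabar1 (Phi \<nu> f g h)"
  shows "\<exists>\<epsilon>>0. \<forall>\<zeta>. norm \<zeta> < \<epsilon> \<longrightarrow> f \<zeta> = 0 \<and> g \<zeta> = 0 \<and> h \<zeta> = 0"
proof -
  obtain \<delta> \<rho> A B where "\<delta> > 0" "\<delta> \<le> \<rho>"
    and A: "(\<lambda>(a, b, k, d). norm (A a b k d) * \<rho> ^ (a + b + k + d)) summable_on UNIV"
    and eq: "\<And>z \<zeta> w1 w2. z \<in> ball 0 \<delta> \<Longrightarrow> \<zeta> \<in> ball 0 \<delta> \<Longrightarrow> w1 \<in> ball 0 \<delta> \<Longrightarrow> w2 \<in> ball 0 \<delta> \<Longrightarrow>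
       Phi_polar \<nu> f g h z \<zeta> w1 w2 = w1 ^ 3 * eval_ps4 A z \<zeta> w1 w2 + w2 * eval_ps4 B z \<zeta> w1 w2"
    using Phi_polar_eq_if_O_zbar3_zetabar1[OF assms(2-6)] by blast
  obtain m where m: "\<nu> = m + 5" using \<open>\<nu> \<ge> 5\<close> by (metis add.commute le_add_diff_inverse)
  have "f \<zeta> = 0 \<and> g \<zeta> = 0 \<and> h \<zeta> = 0" if \<zeta>: "\<zeta> \<in> ball 0 \<delta>" for \<zeta>
  proof -
    define X where "X = complex_of_real (\<delta> / 2)"
    have X: "X \<in> ball 0 \<delta>" "X \<noteq> 0" using \<open>\<delta> > 0\<close> by (auto simp: X_def)
    define R where "R w = (X + w * \<zeta>) * w ^ (m + 1) * cnj_reflect f 0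
      + (X + w * \<zeta>)\<^sup>2 * w ^ m * cnj_reflect g 0 / 2 - w ^ (m + 2) * cnj_reflect h 0 / 2
      - eval_ps4 A X \<zeta> w 0" for w
    have "(\<lambda>w. eval_ps4 A X \<zeta> w 0) holomorphic_on ball 0 \<delta>"
      using X \<zeta> \<open>\<delta> \<le> \<rho>\<close> \<open>\<delta> > 0\<close>
      by (intro holomorphic_on_eval_ps4[OF A]) (auto intro: holomorphic_intros)
    then have "isCont (\<lambda>w. eval_ps4 A X \<zeta> w 0) 0"
      using \<open>\<delta> > 0\<close>
      by (metis centre_in_ball continuous_on_eq_continuous_at holomorphic_on_imp_continuous_on open_ball)
    then have cont: "isCont R 0" unfolding R_def by (intro continuous_intros) auto
    have expansion: "- (X ^ \<nu> * h \<zeta>) / 2 + X ^ (\<nu> - 1) * f \<zeta> * w + X ^ (\<nu> - 2) * g \<zeta> / 2 * w\<^sup>2 + w ^ 3 * R w = 0"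
      if "w \<in> ball 0 \<delta>" for w
    proof -
      have "Phi_polar \<nu> f g h X \<zeta> w 0 = w ^ 3 * eval_ps4 A X \<zeta> w 0"
        using eq[OF X(1) \<zeta> that, of 0] \<open>\<delta> > 0\<close> by simp
      moreover have "Phi_polar \<nu> f g h X \<zeta> w 0 = - (X ^ \<nu> * h \<zeta>) / 2 + X ^ (\<nu> - 1) * f \<zeta> * w
          + X ^ (\<nu> - 2) * g \<zeta> / 2 * w\<^sup>2 + w ^ 3 * (R w + eval_ps4 A X \<zeta> w 0)"
        by (simp add: Phi_polar_def Phi_X_polar_def R_def m power_add eval_nat_numeral algebra_simps)
      ultimately show ?thesis by (simp add: algebra_simps)
    qed
    show ?thesis
      using cubic_remainder_coeffs_eq_zero[OF cont \<open>\<delta> > 0\<close> expansion] X(2) by simp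
  qed
  then show ?thesis using \<open>\<delta> > 0\<close> by auto
qed

theorem lemma7p4:
  fixes \<nu> :: nat and f g h :: "complex \<Rightarrow> complex" and r :: real
  assumes "\<nu> \<ge> 5" and "r > 0"
    and "f holomorphic_on ball 0 r" and "g holomorphic_on ball 0 r" and "h holomorphic_on ball 0 r"
  shows "O_zbar3_zetabar1 (Phi \<nu> f g h) \<longleftrightarrow>
         (\<exists>\<epsilon>>0. \<forall>\<zeta>. norm \<zeta> < \<epsilon> \<longrightarrow> f \<zeta> = 0 \<and> g \<zeta> = 0 \<and> h \<zeta> = 0)"
proof
  assume "O_zbar3_zetabar1 (Phi \<nu> f g h)"
  with assms show "\<exists>\<epsilon>>0. \<forall>\<zeta>. norm \<zeta> < \<epsilon> \<longrightarrow> f \<zeta> = 0 \<and> g \<zeta> = 0 \<and> h \<zeta> = 0"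
    by (rule vanishing_if_Phi_O_zbar3_zetabar1)
next
  assume "\<exists>\<epsilon>>0. \<forall>\<zeta>. norm \<zeta> < \<epsilon> \<longrightarrow> f \<zeta> = 0 \<and> g \<zeta> = 0 \<and> h \<zeta> = 0"
  then obtain \<epsilon> where "\<epsilon> > 0" and vanish: "\<And>\<zeta>. norm \<zeta> < \<epsilon> \<Longrightarrow> f \<zeta> = 0 \<and> g \<zeta> = 0 \<and> h \<zeta> = 0"
    by blast
  show "O_zbar3_zetabar1 (Phi \<nu> f g h)"
  proof (rule O_zbar3_zetabar1_if_locally_zero[OF \<open>\<epsilon> > 0\<close>])
    fix z \<zeta> :: complex assume "norm \<zeta> < \<epsilon>"
    then show "Phi \<nu> f g h z \<zeta> = 0" using vanish by (simp add: Phi_def)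
  qed
qed

end
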